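(* Let $G=(V,E)$ be a graph with $n=|V|$ vertices and maximum degree at most $B$, and let $k\le n$ be a nonnegative integer. Construct the graph $G'=(V',E')$ as follows. For each $v\in V$ add a copy of the complete bipartite graph $K_{B+1,B+2}$ (the choice gadget of $v$, with smaller side $S_v$ of $B+1$ vertices and larger side $L_v$ of $B+2$ vertices); add a vertex $v_d$ together with $B-d(v)+1$ new pendant vertices (leaves) adjacent only to $v_d$, where $d(v)$ is the degree of $v$ in $G$; and for each $u\in N[v]$ (closed neighbourhood of $v$ in $G$) add an edge from a vertex of $L_v$ to $u_d$, using distinct vertices of $L_v$ for distinct $u\in N[v]$. Define capacities $c(v_d)=B+1$ for all $v\in V$ and $c(w)=\deg_{G'}(w)$ for all other vertices $w$ of $G'$. Then $G'$ has maximum degree $B+2$, $|E'|=n(B+2)^2$, and $G$ has a dominating set of size at most $k$ if and only if $G'$ has a capacitated vertex cover (with respect to $c$) of size at most $|E'|/(B+2)+k=n(B+2)+k$.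
   Context: A dominating set of $G$ is a set $S\subseteq V$ such that every vertex of $G$ is in $S$ or adjacent to a vertex of $S$. Given a graph with vertex capacities $c:V\to\mathbb{Z}_{\ge 0}$, a capacitated vertex cover is a set $C$ of vertices together with an assignment of every edge to one of its endpoints lying in $C$ such that each $w\in C$ is assigned at most $c(w)$ edges. *)

theory Defs
  imports Main
begin

definition simple_graph :: "'a set \<Rightarrow> 'a set set \<Rightarrow> bool" where
  "simple_graph V E \<longleftrightarrow> finite V \<and>
     (\<forall>e\<in>E. \<exists>u w. u \<noteq> w \<and> u \<in> V \<and> w \<in> V \<and> e = {u, w})"

definition gdeg :: "'a set set \<Rightarrow> 'a \<Rightarrow> nat" where
  "gdeg E v = card {e \<in> E. v \<in> e}"

definition closed_nbhd :: "'a set \<Rightarrow> 'a set set \<Rightarrow> 'a \<Rightarrow> 'a set" where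
  "closed_nbhd V E v = insert v {u \<in> V. {u, v} \<in> E}"

definition dominating_set :: "'a set \<Rightarrow> 'a set set \<Rightarrow> 'a set \<Rightarrow> bool" where
  "dominating_set V E S \<longleftrightarrow> S \<subseteq> V \<and> (\<forall>v\<in>V. v \<in> S \<or> (\<exists>u\<in>S. {u, v} \<in> E))"

definition capacitated_vertex_cover ::
  "'v set \<Rightarrow> 'v set set \<Rightarrow> ('v \<Rightarrow> nat) \<Rightarrow> 'v set \<Rightarrow> bool" where
  "capacitated_vertex_cover V E c C \<longleftrightarrow> C \<subseteq> V \<and>
     (\<exists>a :: 'v set \<Rightarrow> 'v. (\<forall>e\<in>E. a e \<in> e \<and> a e \<in> C) \<and>
                      (\<forall>w\<in>C. card {e \<in> E. a e = w} \<le> c w))"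

text \<open>Vertices of the constructed graph G': for each v, the small side S_v (S v i, i < B+1),
  the large side L_v (L v j, j < B+2), the vertex v_d (D v) and the leaves (Leaf v i).\<close>

datatype 'a gvert = S 'a nat | L 'a nat | D 'a | Leaf 'a nat

definition red_vertices :: "'a set \<Rightarrow> 'a set set \<Rightarrow> nat \<Rightarrow> 'a gvert set" where
  "red_vertices V E B = (\<Union>v\<in>V.
      {S v i | i. i < B + 1} \<union> {L v j | j. j < B + 2} \<union> {D v}
      \<union> {Leaf v i | i. i < B - gdeg E v + 1})"

text \<open>\<sigma> v u is the index of the vertex of L_v joined to u_d, for u in N[v].\<close>

definition red_edges ::
  "'a set \<Rightarrow> 'a set set \<Rightarrow> nat \<Rightarrow> ('a \<Rightarrow> 'a \<Rightarrow> nat) \<Rightarrow> 'a gvert set set" where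
  "red_edges V E B \<sigma> = (\<Union>v\<in>V.
      {{S v i, L v j} | i j. i < B + 1 \<and> j < B + 2}
      \<union> {{D v, Leaf v i} | i. i < B - gdeg E v + 1}
      \<union> {{L v (\<sigma> v u), D u} | u. u \<in> closed_nbhd V E v})"

definition red_cap :: "nat \<Rightarrow> 'a gvert set set \<Rightarrow> 'a gvert \<Rightarrow> nat" where
  "red_cap B E' w = (case w of D _ \<Rightarrow> B + 1 | _ \<Rightarrow> gdeg E' w)"

end

theory Submission
  imports Defs
begin

(* Every vertex v of G contributes exactly (B+2)^2 edges to G': (B+1)(B+2) gadget edges
   S_v--L_v, B - d(v) + 1 leaf edges at v_d, and d(v) + 1 connector edges from L_v to the
   vertices u_d, u in N[v].  The vertex u_d is incident to its leaves and to one connector edge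
   from each L_v, v in N[u], so it has degree exactly B + 2, one more than its capacity.

   Forward: from a dominating set X take all of L_v for v in X, all of S_v for v not in X, and
   every v_d.  Assigning each edge to an endpoint other than a v_d whenever possible relieves
   every u_d of the connector edge coming from a dominator of u.
   Backward: a vertex cover contains at least B + 2 of the vertices owned by v, with equality
   only for the base part S_v + v_d.  Hence at most k vertices have a non-base part, and they
   dominate G: if all of N[u] had base parts, u_d would have to take all B + 2 of its edges. *)


lemma simple_graph_no_loop:
  assumes "simple_graph V E"
  shows "{v} \<notin> E"
proof
  assume "{v} \<in> E"
  then obtain x y where "x \<noteq> y" "{v} = {x, y}"
    using assms by (auto simp: simple_graph_def)
  then show False by (metis insertI1 insert_commute singletonD)
qed

lemma self_in_closed_nbhd: "v \<in> closed_nbhd V E v"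
  by (simp add: closed_nbhd_def)

lemma closed_nbhd_subset: "v \<in> V \<Longrightarrow> closed_nbhd V E v \<subseteq> V"
  by (auto simp: closed_nbhd_def)

lemma finite_closed_nbhd: "finite V \<Longrightarrow> finite (closed_nbhd V E v)"
  by (simp add: closed_nbhd_def)

lemma closed_nbhd_sym:
  "u \<in> V \<Longrightarrow> v \<in> V \<Longrightarrow> u \<in> closed_nbhd V E v \<longleftrightarrow> v \<in> closed_nbhd V E u"
  by (auto simp: closed_nbhd_def insert_commute)

text \<open>|N[v]| = d(v) + 1: the open neighbours correspond bijectively to the incident edges.\<close>

lemma card_closed_nbhd:
  assumes graph: "simple_graph V E" and "v \<in> V"
  shows "card (closed_nbhd V E v) = gdeg E v + 1"
proof -
  let ?A = "{u \<in> V. {u, v} \<in> E}"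
  have "bij_betw (\<lambda>u. {u, v}) ?A {e \<in> E. v \<in> e}"
  proof (rule bij_betwI')
    fix x y assume "x \<in> ?A" "y \<in> ?A"
    then show "({x, v} = {y, v}) = (x = y)"
      using simple_graph_no_loop[OF graph] by (auto simp: doubleton_eq_iff)
  next
    fix e assume "e \<in> {e \<in> E. v \<in> e}"
    then obtain x y where "x \<in> V" "y \<in> V" "e = {x, y}" "e \<in> E" "v \<in> e"
      using graph by (auto simp: simple_graph_def)
    then show "\<exists>x\<in>?A. e = {x, v}" by (auto simp: insert_commute)
  qed auto
  then have "card ?A = gdeg E v"
    unfolding gdeg_def by (rule bij_betw_same_card)
  moreover have "v \<notin> ?A" "finite ?A"
    using simple_graph_no_loop[OF graph] graph by (auto simp: simple_graph_def)
  ultimately show ?thesis by (simp add: closed_nbhd_def)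
qed

lemma dominating_set_iff_closed_nbhd:
  "dominating_set V E X \<longleftrightarrow> X \<subseteq> V \<and> (\<forall>u\<in>V. \<exists>v\<in>X. v \<in> closed_nbhd V E u)"
  unfolding dominating_set_def closed_nbhd_def by blast


lemma card_assigned_le_gdeg:
  assumes "finite E'" "\<forall>e\<in>E'. a e \<in> e"
  shows "card {e \<in> E'. a e = w} \<le> gdeg E' w"
  unfolding gdeg_def using assms by (intro card_mono) auto

lemma card_assigned_less_gdeg:
  assumes "finite E'" "\<forall>e\<in>E'. a e \<in> e" "e0 \<in> E'" "w \<in> e0" "a e0 \<noteq> w"
  shows "card {e \<in> E'. a e = w} < gdeg E' w"
  unfolding gdeg_def using assms by (intro psubset_card_mono) auto

lemma preferring_assignment:
  assumes "\<forall>e\<in>E'. \<exists>x\<in>e. x \<in> C"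
  obtains a where "\<forall>e\<in>E'. a e \<in> e \<and> a e \<in> C"
    and "\<forall>e\<in>E'. (\<exists>x\<in>e. x \<in> C \<and> P x) \<longrightarrow> P (a e)"
proof -
  have "\<forall>e\<in>E'. \<exists>x. x \<in> e \<and> x \<in> C \<and> ((\<exists>y\<in>e. y \<in> C \<and> P y) \<longrightarrow> P x)"
    using assms by blast
  then obtain a where "\<forall>e\<in>E'. a e \<in> e \<and> a e \<in> C \<and> ((\<exists>y\<in>e. y \<in> C \<and> P y) \<longrightarrow> P (a e))"
    by (metis (no_types) bchoice)
  then show thesis using that by blast
qed


lemma sum_base_plus_indicator:
  fixes b :: nat
  assumes "finite V" "X \<subseteq> V"
  shows "(\<Sum>v\<in>V. b + (if v \<in> X then 1 else 0)) = card V * b + card X"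
  using assms by (simp add: sum.distrib sum.If_cases Int_absorb1)


section \<open>The constructed graph\<close>

fun owner :: "'a gvert \<Rightarrow> 'a" where
  "owner (S v _) = v"
| "owner (L v _) = v"
| "owner (D v) = v"
| "owner (Leaf v _) = v"

fun is_D :: "'a gvert \<Rightarrow> bool" where
  "is_D (D _) = True"
| "is_D _ = False"

locale reduction =
  fixes V :: "'a set" and E :: "'a set set" and B :: nat and \<sigma> :: "'a \<Rightarrow> 'a \<Rightarrow> nat"
  assumes graph: "simple_graph V E"
    and maxdeg: "\<forall>v\<in>V. gdeg E v \<le> B"
    and \<sigma>_range: "\<forall>v\<in>V. \<forall>u\<in>closed_nbhd V E v. \<sigma> v u < B + 2"
    and \<sigma>_inj: "\<forall>v\<in>V. inj_on (\<sigma> v) (closed_nbhd V E v)"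
begin

abbreviation "N \<equiv> closed_nbhd V E"
abbreviation "V' \<equiv> red_vertices V E B"
abbreviation "E' \<equiv> red_edges V E B \<sigma>"

definition gadget_edges :: "'a \<Rightarrow> 'a gvert set set" where
  "gadget_edges v = (\<lambda>(i, j). {S v i, L v j}) ` ({..<B+1} \<times> {..<B+2})"

definition leaf_edges :: "'a \<Rightarrow> 'a gvert set set" where
  "leaf_edges v = (\<lambda>i. {D v, Leaf v i}) ` {..<B - gdeg E v + 1}"

definition connector_edges :: "'a \<Rightarrow> 'a gvert set set" where
  "connector_edges v = (\<lambda>u. {L v (\<sigma> v u), D u}) ` N v"

lemma finite_V: "finite V"
  using graph by (simp add: simple_graph_def)

lemma red_edges_decomp:
  "E' = (\<Union>v\<in>V. gadget_edges v \<union> leaf_edges v \<union> connector_edges v)"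
  unfolding red_edges_def gadget_edges_def leaf_edges_def connector_edges_def by (auto; blast)

lemma red_vertices_decomp:
  "V' = (\<Union>v\<in>V. S v ` {..<B+1} \<union> L v ` {..<B+2} \<union> {D v} \<union> Leaf v ` {..<B - gdeg E v + 1})"
  unfolding red_vertices_def by (auto; blast)

lemma finite_red_edges: "finite E'"
  unfolding red_edges_decomp using finite_V
  by (auto simp: gadget_edges_def leaf_edges_def connector_edges_def finite_closed_nbhd)

lemma finite_red_vertices: "finite V'"
  unfolding red_vertices_decomp using finite_V by auto

lemma owner_in_V: "x \<in> V' \<Longrightarrow> owner x \<in> V"
  unfolding red_vertices_decomp by auto

lemma red_edgeE:
  assumes "e \<in> E'"
  obtains (gadget) v i j where "v \<in> V" "i < B + 1" "j < B + 2" "e = {S v i, L v j}"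
  | (leaf) v i where "v \<in> V" "i < B - gdeg E v + 1" "e = {D v, Leaf v i}"
  | (connector) v u where "v \<in> V" "u \<in> N v" "e = {L v (\<sigma> v u), D u}"
  using assms unfolding red_edges_def by blast

lemma gadget_edge_in: "v \<in> V \<Longrightarrow> i < B + 1 \<Longrightarrow> j < B + 2 \<Longrightarrow> {S v i, L v j} \<in> E'"
  unfolding red_edges_def by blast

lemma leaf_edge_in: "v \<in> V \<Longrightarrow> {D v, Leaf v 0} \<in> E'"
  unfolding red_edges_def by (rule UN_I[of v]) auto

lemma connector_edge_in: "v \<in> V \<Longrightarrow> u \<in> N v \<Longrightarrow> {L v (\<sigma> v u), D u} \<in> E'"
  unfolding red_edges_def by (rule UN_I[of v]) auto


text \<open>Each vertex contributes (B+1)(B+2) + (B - d(v) + 1) + (d(v) + 1) = (B+2)^2 edges.\<close>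

lemma card_contribution:
  assumes "v \<in> V"
  shows "card (gadget_edges v \<union> leaf_edges v \<union> connector_edges v) = (B + 2)^2"
proof -
  have "card (gadget_edges v) = (B + 1) * (B + 2)"
    unfolding gadget_edges_def
    by (subst card_image) (auto simp: inj_on_def doubleton_eq_iff card_cartesian_product)
  moreover have "card (leaf_edges v) = B - gdeg E v + 1"
    unfolding leaf_edges_def by (subst card_image) (auto simp: inj_on_def doubleton_eq_iff)
  moreover have "card (connector_edges v) = gdeg E v + 1"
    unfolding connector_edges_def using card_closed_nbhd[OF graph assms]
    by (subst card_image) (auto simp: inj_on_def doubleton_eq_iff)
  moreover have "gadget_edges v \<inter> leaf_edges v = {}"
    "(gadget_edges v \<union> leaf_edges v) \<inter> connector_edges v = {}"
    by (auto simp: gadget_edges_def leaf_edges_def connector_edges_def doubleton_eq_iff)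
  moreover have "finite (connector_edges v)"
    by (simp add: connector_edges_def finite_closed_nbhd finite_V)
  moreover have "gdeg E v \<le> B" using maxdeg assms by auto
  ultimately show ?thesis
    by (simp add: card_Un_disjoint gadget_edges_def leaf_edges_def power2_eq_square)
qed

lemma card_red_edges: "card E' = card V * (B + 2)^2"
proof -
  have "card E' = (\<Sum>v\<in>V. card (gadget_edges v \<union> leaf_edges v \<union> connector_edges v))"
    unfolding red_edges_decomp using finite_V
    by (intro card_UN_disjoint)
       (auto simp: gadget_edges_def leaf_edges_def connector_edges_def doubleton_eq_iff
                   finite_closed_nbhd)
  then show ?thesis by (simp add: card_contribution)
qed


text \<open>A vertex of S_v is adjacent exactly to L_v; a leaf only to its v_d.\<close>

lemma gdeg_S: "gdeg E' (S v i) \<le> B + 2"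
proof -
  have "{e \<in> E'. S v i \<in> e} \<subseteq> (\<lambda>j. {S v i, L v j}) ` {..<B+2}"
    by (auto elim!: red_edgeE)
  then have "gdeg E' (S v i) \<le> card ((\<lambda>j. {S v i, L v j}) ` {..<B+2})"
    unfolding gdeg_def by (intro card_mono) auto
  also have "\<dots> \<le> B + 2" using card_image_le[of "{..<B+2}"] by simp
  finally show ?thesis .
qed

lemma gdeg_Leaf: "gdeg E' (Leaf v i) \<le> B + 2"
proof -
  have "{e \<in> E'. Leaf v i \<in> e} \<subseteq> {{D v, Leaf v i}}"
    by (auto elim!: red_edgeE)
  then have "gdeg E' (Leaf v i) \<le> 1"
    unfolding gdeg_def using card_mono[of "{{D v, Leaf v i}}"] by fastforce
  then show ?thesis by simp
qed

text \<open>L v j sees the B + 1 vertices of S_v and, by injectivity of \<sigma> v, at most one u_d.\<close>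

lemma gdeg_L:
  assumes "v \<in> V"
  shows "gdeg E' (L v j) \<le> B + 2"
proof -
  let ?U = "{u \<in> N v. \<sigma> v u = j}"
  let ?A = "(\<lambda>i. {S v i, L v j}) ` {..<B+1}"
  let ?M = "(\<lambda>u. {L v j, D u}) ` ?U"
  have "card ?U \<le> 1"
    using \<sigma>_inj assms finite_closed_nbhd[OF finite_V]
    by (auto simp: card_le_Suc0_iff_eq inj_on_def)
  then have cM: "card ?M \<le> 1"
    using card_image_le[of ?U "\<lambda>u. {L v j, D u}"] finite_closed_nbhd[OF finite_V] by simp
  have "{e \<in> E'. L v j \<in> e} \<subseteq> ?A \<union> ?M"
    by (auto elim!: red_edgeE)
  then have "gdeg E' (L v j) \<le> card (?A \<union> ?M)"
    unfolding gdeg_def using finite_closed_nbhd[OF finite_V] by (intro card_mono) auto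
  also have "\<dots> \<le> card ?A + card ?M" by (rule card_Un_le)
  also have "card ?A \<le> B + 1" using card_image_le[of "{..<B+1}" "\<lambda>i. {S v i, L v j}"] by simp
  finally show ?thesis using cM by simp
qed

lemma incident_D:
  assumes "u \<in> V"
  shows "{e \<in> E'. D u \<in> e} = leaf_edges u \<union> (\<lambda>v. {L v (\<sigma> v u), D u}) ` N u"
proof (intro equalityI subsetI)
  fix e assume "e \<in> {e \<in> E'. D u \<in> e}"
  then have "e \<in> E'" "D u \<in> e" by auto
  then show "e \<in> leaf_edges u \<union> (\<lambda>v. {L v (\<sigma> v u), D u}) ` N u"
  proof (cases rule: red_edgeE)
    case (connector v w)
    then have "w = u" "u \<in> N v" using \<open>D u \<in> e\<close> by auto
    then have "v \<in> N u" using closed_nbhd_sym[OF assms \<open>v \<in> V\<close>] by simp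
    then show ?thesis using connector \<open>w = u\<close> by auto
  qed (auto simp: leaf_edges_def)
next
  fix e assume "e \<in> leaf_edges u \<union> (\<lambda>v. {L v (\<sigma> v u), D u}) ` N u"
  then show "e \<in> {e \<in> E'. D u \<in> e}"
  proof
    assume "e \<in> leaf_edges u"
    then show ?thesis using assms unfolding red_edges_def leaf_edges_def by blast
  next
    assume "e \<in> (\<lambda>v. {L v (\<sigma> v u), D u}) ` N u"
    then obtain v where v: "v \<in> N u" "e = {L v (\<sigma> v u), D u}" by auto
    then have "v \<in> V" using closed_nbhd_subset[OF assms] by auto
    then have "u \<in> N v" using v closed_nbhd_sym[OF assms] by simp
    then show ?thesis using v \<open>v \<in> V\<close> connector_edge_in by auto
  qed
qed

text \<open>Hence deg(u_d) = (B - d(u) + 1) + (d(u) + 1) = B + 2.\<close>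

lemma gdeg_D:
  assumes "u \<in> V"
  shows "gdeg E' (D u) = B + 2"
proof -
  have "card (leaf_edges u) = B - gdeg E u + 1"
    unfolding leaf_edges_def by (subst card_image) (auto simp: inj_on_def doubleton_eq_iff)
  moreover have "card ((\<lambda>v. {L v (\<sigma> v u), D u}) ` N u) = gdeg E u + 1"
    using card_closed_nbhd[OF graph assms]
    by (subst card_image) (auto simp: inj_on_def doubleton_eq_iff)
  moreover have "leaf_edges u \<inter> (\<lambda>v. {L v (\<sigma> v u), D u}) ` N u = {}"
    by (auto simp: leaf_edges_def doubleton_eq_iff)
  moreover have "gdeg E u \<le> B" using maxdeg assms by auto
  ultimately show ?thesis
    unfolding gdeg_def incident_D[OF assms]
    by (simp add: card_Un_disjoint leaf_edges_def finite_closed_nbhd finite_V)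
qed

lemma red_max_degree: "\<forall>w\<in>V'. gdeg E' w \<le> B + 2"
  unfolding red_vertices_decomp using gdeg_S gdeg_L gdeg_D gdeg_Leaf by auto


subsection \<open>From a dominating set to a capacitated vertex cover\<close>

definition induced_cover :: "'a set \<Rightarrow> 'a gvert set" where
  "induced_cover X =
     (\<Union>v\<in>V. (if v \<in> X then L v ` {..<B+2} else S v ` {..<B+1}) \<union> {D v})"

lemma induced_cover_subset: "induced_cover X \<subseteq> V'"
  unfolding induced_cover_def red_vertices_decomp by (auto split: if_splits)

lemma induced_cover_covers: "\<forall>e\<in>E'. \<exists>x\<in>e. x \<in> induced_cover X"
proof
  have D_in: "D u \<in> induced_cover X" if "u \<in> V" for u
    unfolding induced_cover_def using that by (intro UN_I[of u]) auto
  fix e assume "e \<in> E'"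
  then show "\<exists>x\<in>e. x \<in> induced_cover X"
  proof (cases rule: red_edgeE)
    case (gadget v i j)
    then have "(if v \<in> X then L v j else S v i) \<in> induced_cover X"
      unfolding induced_cover_def by (intro UN_I[of v]) auto
    then show ?thesis using gadget by (auto split: if_splits)
  next
    case (leaf v i)
    then show ?thesis using D_in[of v] by simp
  next
    case (connector v u)
    then have "u \<in> V" using closed_nbhd_subset[of v] by blast
    then show ?thesis using connector D_in[of u] by simp
  qed
qed

lemma card_induced_cover:
  assumes "X \<subseteq> V"
  shows "card (induced_cover X) \<le> card V * (B + 2) + card X"
proof -
  have part: "card ((if v \<in> X then L v ` {..<B+2} else S v ` {..<B+1}) \<union> {D v})
              \<le> B + 2 + (if v \<in> X then 1 else 0)" for v
  proof -
    have "card ((if v \<in> X then L v ` {..<B+2} else S v ` {..<B+1}) \<union> {D v})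
          \<le> card (if v \<in> X then L v ` {..<B+2} else S v ` {..<B+1}) + card {D v}"
      by (rule card_Un_le)
    also have "\<dots> \<le> B + 2 + (if v \<in> X then 1 else 0)"
      using card_image_le[of "{..<B+2}" "L v"] card_image_le[of "{..<B+1}" "S v"] by auto
    finally show ?thesis .
  qed
  have "card (induced_cover X)
        \<le> (\<Sum>v\<in>V. card ((if v \<in> X then L v ` {..<B+2} else S v ` {..<B+1}) \<union> {D v}))"
    unfolding induced_cover_def using finite_V by (rule card_UN_le)
  also have "\<dots> \<le> (\<Sum>v\<in>V. B + 2 + (if v \<in> X then 1 else 0))"
    using part by (rule sum_mono)
  also have "\<dots> = card V * (B + 2) + card X"
    using finite_V assms by (rule sum_base_plus_indicator)
  finally show ?thesis .
qed

text \<open>If X dominates, every u_d is joined by a connector edge to a vertex of the induced cover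
  other than a vertex v_d; this is the edge that relieves u_d.\<close>

lemma dominated_D_relieved:
  assumes "dominating_set V E X" "u \<in> V"
  obtains y where "{y, D u} \<in> E'" "y \<in> induced_cover X" "\<not> is_D y"
proof -
  have "X \<subseteq> V" "\<exists>v\<in>X. v \<in> N u"
    using assms by (auto simp: dominating_set_iff_closed_nbhd)
  then obtain v where v: "v \<in> X" "v \<in> N u" "v \<in> V" by blast
  then have "u \<in> N v" using closed_nbhd_sym[OF assms(2)] by simp
  then have "{L v (\<sigma> v u), D u} \<in> E'" "L v (\<sigma> v u) \<in> induced_cover X"
    using v \<sigma>_range connector_edge_in by (auto simp: induced_cover_def)
  then show thesis using that by simp
qed

text \<open>Forward direction: under an assignment avoiding the vertices v_d, each u_d loses its
  relieving edge and so respects capacity B + 1; all other capacities are the degrees.\<close>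

lemma dominating_set_to_cover:
  assumes dom: "dominating_set V E X"
  shows "capacitated_vertex_cover V' E' (red_cap B E') (induced_cover X)
         \<and> card (induced_cover X) \<le> card V * (B + 2) + card X"
proof -
  let ?C = "induced_cover X"
  obtain a where a: "\<forall>e\<in>E'. a e \<in> e \<and> a e \<in> ?C"
    and avoid_D: "\<forall>e\<in>E'. (\<exists>x\<in>e. x \<in> ?C \<and> \<not> is_D x) \<longrightarrow> \<not> is_D (a e)"
    using preferring_assignment[OF induced_cover_covers, where P = "\<lambda>x. \<not> is_D x"] by blast
  have cap: "card {e \<in> E'. a e = w} \<le> red_cap B E' w" if "w \<in> ?C" for w
  proof (cases w)
    case (D u)
    then have "u \<in> V" using that owner_in_V induced_cover_subset by fastforce
    then obtain y where "{y, D u} \<in> E'" "y \<in> ?C" "\<not> is_D y"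
      using dominated_D_relieved[OF dom] by blast
    then have "a {y, D u} \<noteq> D u" using avoid_D by fastforce
    then have "card {e \<in> E'. a e = D u} < gdeg E' (D u)"
      using a finite_red_edges \<open>{y, D u} \<in> E'\<close>
      by (intro card_assigned_less_gdeg[of _ _ "{y, D u}"]) auto
    then show ?thesis using D gdeg_D[OF \<open>u \<in> V\<close>] by (simp add: red_cap_def)
  qed (use card_assigned_le_gdeg[OF finite_red_edges] a in \<open>auto simp: red_cap_def\<close>)
  have "capacitated_vertex_cover V' E' (red_cap B E') ?C"
    unfolding capacitated_vertex_cover_def using induced_cover_subset a cap by blast
  then show ?thesis using card_induced_cover dom by (simp add: dominating_set_def)
qed


subsection \<open>From a capacitated vertex cover to a dominating set\<close>

definition part :: "'a gvert set \<Rightarrow> 'a \<Rightarrow> 'a gvert set" where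
  "part C v = {x \<in> C. owner x = v}"

definition base_part :: "'a \<Rightarrow> 'a gvert set" where
  "base_part v = insert (D v) (S v ` {..<B+1})"

lemma card_base_part: "card (base_part v) = B + 2"
proof -
  have "D v \<notin> S v ` {..<B+1}" "card (S v ` {..<B+1}) = B + 1"
    by (auto simp: card_image inj_on_def)
  then show ?thesis by (simp add: base_part_def)
qed

lemma part_lower_bound:
  assumes C: "C \<subseteq> V'" and cov: "\<forall>e\<in>E'. \<exists>x\<in>e. x \<in> C" and v: "v \<in> V"
  shows "B + 2 + (if part C v \<noteq> base_part v then 1 else 0) \<le> card (part C v)"
proof -
  let ?P = "part C v" and ?Sv = "S v ` {..<B+1}" and ?Lv = "L v ` {..<B+2}"
  have fin: "finite ?P"
    using C finite_red_vertices by (auto simp: part_def intro: finite_subset)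
  have in_part: "x \<in> C \<Longrightarrow> owner x = v \<Longrightarrow> x \<in> ?P" for x by (simp add: part_def)
  have cSv: "card ?Sv = B + 1" and cLv: "card ?Lv = B + 2" by (simp_all add: card_image inj_on_def)
  have DLeaf: "D v \<in> C \<or> Leaf v 0 \<in> C" using cov leaf_edge_in[OF v] by auto
  consider (base) "?Sv \<subseteq> C" "D v \<in> C" | (no_D) "?Sv \<subseteq> C" "D v \<notin> C" | (no_S) "\<not> ?Sv \<subseteq> C"
    by blast
  then show ?thesis
  proof cases
    case base
    then have sub: "base_part v \<subseteq> ?P" by (auto simp: base_part_def part_def)
    show ?thesis
    proof (cases "?P = base_part v")
      case False
      then obtain y where "y \<in> ?P" "y \<notin> base_part v" using sub by blast
      then have "card (insert y (base_part v)) \<le> card ?P"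
        using sub fin by (intro card_mono) auto
      then show ?thesis using \<open>y \<notin> base_part v\<close> card_base_part False
        by (simp add: base_part_def)
    qed (simp add: card_base_part)
  next
    case no_D
    then have "L v (\<sigma> v v) \<in> C" "Leaf v 0 \<in> C"
      using DLeaf cov connector_edge_in[OF v self_in_closed_nbhd] by auto
    then have "insert (Leaf v 0) (insert (L v (\<sigma> v v)) ?Sv) \<subseteq> ?P"
      using no_D by (auto simp: part_def)
    then have "card (insert (Leaf v 0) (insert (L v (\<sigma> v v)) ?Sv)) \<le> card ?P"
      using fin by (rule card_mono[rotated])
    then have "B + 3 \<le> card ?P" using cSv by (simp add: image_iff)
    then show ?thesis by (simp add: card_base_part)
  next
    case no_S
    then obtain i where i: "i < B + 1" "S v i \<notin> C" by auto
    have "?Lv \<subseteq> C" using cov gadget_edge_in[OF v i(1)] i(2) by fastforce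
    moreover obtain z where "z \<in> C" "z \<in> {D v, Leaf v 0}" using DLeaf by blast
    ultimately have "insert z ?Lv \<subseteq> ?P" by (auto simp: part_def)
    then have "card (insert z ?Lv) \<le> card ?P" using fin by (rule card_mono[rotated])
    then have "B + 3 \<le> card ?P" using cLv \<open>z \<in> {D v, Leaf v 0}\<close> by (auto simp: image_iff)
    then show ?thesis by (simp add: card_base_part)
  qed
qed

text \<open>If every vertex of N[u] has its base part in C, then no neighbour of u_d lies in C, so
  u_d must take all of its B + 2 edges: the capacity B + 1 is exceeded.\<close>

lemma undominated_D_overloaded:
  assumes a: "\<forall>e\<in>E'. a e \<in> e \<and> a e \<in> C" and u: "u \<in> V"
    and base: "\<forall>v\<in>N u. part C v = base_part v"
  shows "card {e \<in> E'. a e = D u} = B + 2"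
proof -
  have not_in_C: "x \<notin> C" if "owner x \<in> N u" "x \<notin> base_part (owner x)" for x
    using base that by (auto simp: part_def)
  have "{e \<in> E'. D u \<in> e} \<subseteq> {e \<in> E'. a e = D u}"
  proof safe
    fix e assume e: "e \<in> E'" "D u \<in> e"
    then have "e \<in> leaf_edges u \<union> (\<lambda>v. {L v (\<sigma> v u), D u}) ` N u"
      using incident_D[OF u] by auto
    then obtain y where "e = {D u, y}" "y \<notin> C"
    proof
      assume "e \<in> leaf_edges u"
      then obtain i where "e = {D u, Leaf u i}" by (auto simp: leaf_edges_def)
      moreover have "Leaf u i \<notin> C"
        using not_in_C[of "Leaf u i"] self_in_closed_nbhd[of u V E]
        by (simp add: base_part_def image_iff)
      ultimately show thesis using that by blast
    next
      assume "e \<in> (\<lambda>v. {L v (\<sigma> v u), D u}) ` N u"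
      then obtain v where "v \<in> N u" "e = {L v (\<sigma> v u), D u}" by auto
      moreover have "L v (\<sigma> v u) \<notin> C"
        using not_in_C[of "L v (\<sigma> v u)"] \<open>v \<in> N u\<close>
        by (simp add: base_part_def image_iff)
      ultimately show thesis using that by (auto simp: insert_commute)
    qed
    then show "a e = D u" using a e by auto
  qed
  then have "gdeg E' (D u) \<le> card {e \<in> E'. a e = D u}"
    unfolding gdeg_def using finite_red_edges by (intro card_mono) auto
  moreover have "card {e \<in> E'. a e = D u} \<le> gdeg E' (D u)"
    using a finite_red_edges by (intro card_assigned_le_gdeg) auto
  ultimately show ?thesis using gdeg_D[OF u] by simp
qed

text \<open>The vertices whose part is not the base part form a dominating set, and the local lower
  bound shows there are at most |C| - |V|(B + 2) of them.\<close>

lemma cover_to_dominating_set: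
  assumes cvc: "capacitated_vertex_cover V' E' (red_cap B E') C"
  defines "X \<equiv> {v \<in> V. part C v \<noteq> base_part v}"
  shows "dominating_set V E X \<and> card V * (B + 2) + card X \<le> card C"
proof -
  obtain a where a: "\<forall>e\<in>E'. a e \<in> e \<and> a e \<in> C"
    and a_cap: "\<forall>w\<in>C. card {e \<in> E'. a e = w} \<le> red_cap B E' w"
    using cvc unfolding capacitated_vertex_cover_def by blast
  have C: "C \<subseteq> V'" using cvc by (simp add: capacitated_vertex_cover_def)
  have cov: "\<forall>e\<in>E'. \<exists>x\<in>e. x \<in> C" using a by blast
  have "X \<subseteq> V" by (auto simp: X_def)
  have "card V * (B + 2) + card X = (\<Sum>v\<in>V. B + 2 + (if v \<in> X then 1 else 0))"
    using finite_V \<open>X \<subseteq> V\<close> by (rule sum_base_plus_indicator[symmetric])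
  also have "\<dots> \<le> (\<Sum>v\<in>V. card (part C v))"
  proof (rule sum_mono)
    fix v assume "v \<in> V"
    then show "B + 2 + (if v \<in> X then 1 else 0) \<le> card (part C v)"
      using part_lower_bound[OF C cov \<open>v \<in> V\<close>] by (simp add: X_def)
  qed
  also have "\<dots> = card (\<Union>v\<in>V. part C v)"
    using finite_V C finite_red_vertices
    by (intro card_UN_disjoint[symmetric]) (auto simp: part_def intro: finite_subset)
  also have "(\<Union>v\<in>V. part C v) = C"
    using C owner_in_V by (auto simp: part_def)
  finally have size: "card V * (B + 2) + card X \<le> card C" .
  have "\<exists>v\<in>X. v \<in> N u" if u: "u \<in> V" for u
  proof (rule ccontr)
    assume "\<not> (\<exists>v\<in>X. v \<in> N u)"
    then have base: "\<forall>v\<in>N u. part C v = base_part v"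
      using closed_nbhd_subset[OF u] by (auto simp: X_def)
    have "D u \<in> part C u"
      using base self_in_closed_nbhd[of u V E] by (simp add: base_part_def)
    then have "D u \<in> C" by (simp add: part_def)
    moreover have "card {e \<in> E'. a e = D u} = B + 2"
      using undominated_D_overloaded[OF a u base] .
    ultimately show False using a_cap by (auto simp: red_cap_def)
  qed
  then have "dominating_set V E X"
    by (auto simp: dominating_set_iff_closed_nbhd X_def)
  with size show ?thesis by blast
qed

end


theorem mainTheorem8:
  fixes V :: "'a set" and E :: "'a set set" and B k :: nat
    and \<sigma> :: "'a \<Rightarrow> 'a \<Rightarrow> nat"
  assumes graph: "simple_graph V E"
    and maxdeg: "\<forall>v\<in>V. gdeg E v \<le> B"
    and k: "k \<le> card V"
    and \<sigma>_range: "\<forall>v\<in>V. \<forall>u\<in>closed_nbhd V E v. \<sigma> v u < B + 2"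
    and \<sigma>_inj: "\<forall>v\<in>V. inj_on (\<sigma> v) (closed_nbhd V E v)"
  shows "(\<forall>w\<in>red_vertices V E B. gdeg (red_edges V E B \<sigma>) w \<le> B + 2)
       \<and> (V \<noteq> {} \<longrightarrow> (\<exists>w\<in>red_vertices V E B. gdeg (red_edges V E B \<sigma>) w = B + 2))
       \<and> card (red_edges V E B \<sigma>) = card V * (B + 2)^2
       \<and> ((\<exists>Sd. dominating_set V E Sd \<and> card Sd \<le> k) \<longleftrightarrow>
          (\<exists>C. capacitated_vertex_cover (red_vertices V E B) (red_edges V E B \<sigma>)
                 (red_cap B (red_edges V E B \<sigma>)) C
               \<and> card C \<le> card V * (B + 2) + k))"
proof -
  interpret reduction V E B \<sigma>
    using graph maxdeg \<sigma>_range \<sigma>_inj by unfold_locales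
  have degree_attained: "\<exists>w\<in>red_vertices V E B. gdeg (red_edges V E B \<sigma>) w = B + 2"
    if "v \<in> V" for v
    using gdeg_D[OF that] that unfolding red_vertices_decomp by blast
  have "(\<exists>C. capacitated_vertex_cover V' E' (red_cap B E') C \<and> card C \<le> card V * (B + 2) + k)"
    if "dominating_set V E X" "card X \<le> k" for X
    using dominating_set_to_cover[OF that(1)] that(2) by (meson add_left_mono order_trans)
  moreover have "\<exists>X. dominating_set V E X \<and> card X \<le> k"
    if "capacitated_vertex_cover V' E' (red_cap B E') C" "card C \<le> card V * (B + 2) + k" for C
    using cover_to_dominating_set[OF that(1)] that(2) by fastforce
  ultimately show ?thesis
    using red_max_degree degree_attained card_red_edges by blast
qed

end
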